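(* Let $k$ be a positive integer. The clique number of $\mathcal F_k$ is $2$ if $k$ is even and $3$ if $k$ is odd.
   Context: The vertex set $V$ consists of all reduced fractions $p/q$ with $p,q\in\mathbb Z$, $\gcd(p,q)=1$, together with $1/0$; here $p/q$ and $(-p)/(-q)$ denote the same vertex. For vertices define $d(p/q,a/b)=|pb-qa|$. The graph $\mathcal F_k$ has vertex set $V$, with an edge between $p/q$ and $a/b$ exactly when $d(p/q,a/b)=k$. *)

theory Defs
  imports Main "HOL-Library.Extended_Nat"
begin

text \<open>Vertices: reduced fractions p/q (gcd p q = 1, which includes 1/0 = (1,0)),
  where (p,q) and (-p,-q) denote the same vertex.\<close>

definition frac_rel :: "(int \<times> int) \<Rightarrow> (int \<times> int) \<Rightarrow> bool" where
  "frac_rel x y \<longleftrightarrow> coprime (fst x) (snd x) \<and> coprime (fst y) (snd y) \<and>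
      (y = x \<or> y = (- fst x, - snd x))"

lemma frac_rel_part_equivp: "part_equivp frac_rel"
proof (rule part_equivpI)
  show "\<exists>x. frac_rel x x" by (rule exI[of _ "(1,0)"]) (simp add: frac_rel_def)
  show "symp frac_rel" by (auto simp: symp_def frac_rel_def)
  show "transp frac_rel" by (auto simp: transp_def frac_rel_def)
qed

quotient_type vertex = "int \<times> int" / partial: frac_rel
  by (rule frac_rel_part_equivp)

lift_definition dist_F :: "vertex \<Rightarrow> vertex \<Rightarrow> int" is
  "\<lambda>(p, q) (a, b). \<bar>p * b - q * a\<bar>"
  by (auto simp: frac_rel_def algebra_simps abs_minus_commute)

definition F_adj :: "nat \<Rightarrow> vertex \<Rightarrow> vertex \<Rightarrow> bool" where
  "F_adj k x y \<longleftrightarrow> dist_F x y = int k"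

definition is_clique_F :: "nat \<Rightarrow> vertex set \<Rightarrow> bool" where
  "is_clique_F k S \<longleftrightarrow> (\<forall>x\<in>S. \<forall>y\<in>S. x \<noteq> y \<longrightarrow> F_adj k x y)"

definition clique_number_F :: "nat \<Rightarrow> enat" where
  "clique_number_F k = (SUP S \<in> {S. finite S \<and> is_clique_F k S}. enat (card S))"

end

theory Submission
  imports Defs
begin

text \<open>Represent vertices by primitive integer vectors \<open>\<plusminus>(p, q)\<close>, so that \<open>d\<close> is the absolute
  value of a \<open>2 \<times> 2\<close> determinant. For any three vectors the Cramer identity
  \<open>det(y, z) x + det(z, x) y + det(x, y) z = 0\<close> holds; if all three determinants are \<open>\<plusminus>k \<noteq> 0\<close>,
  it forces \<open>z = \<plusminus>(x \<plusminus> y)\<close>. A fourth vertex adjacent to \<open>x\<close>, \<open>y\<close>, \<open>z\<close> is then \<open>\<plusminus>(x \<plusminus> y)\<close> as well,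
  and its determinant with \<open>z\<close> is \<open>0\<close> or \<open>\<plusminus>2k\<close>, so there is no \<open>K\<^sub>4\<close>. For even \<open>k\<close> the primitive
  vectors \<open>x\<close>, \<open>y\<close> are congruent mod 2, so \<open>x \<plusminus> y\<close> is not primitive and there is no triangle.
  Conversely \<open>1/0, 1/k\<close> is an edge and, for odd \<open>k\<close>, \<open>1/0, 1/k, 2/k\<close> is a triangle.\<close>

lemma abs_eq_obtain_sign:
  fixes x :: "'a::linordered_idom"
  assumes "\<bar>x\<bar> = k"
  obtains s where "s \<in> {1, -1}" "x = s * k"
  using assms that[of 1] that[of "-1"] by (cases "x \<ge> 0") auto

lemma triangle_third_vector:
  fixes p q a b c d k :: int
  assumes "\<bar>p * b - q * a\<bar> = k" "\<bar>a * d - b * c\<bar> = k" "\<bar>c * q - d * p\<bar> = k" "k \<noteq> 0"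
  obtains u s where "u \<in> {1, -1}" "s \<in> {1, -1}" "c = u * (p + s * a)" "d = u * (q + s * b)"
proof -
  have cramer:
    "(p * b - q * a) * c + (a * d - b * c) * p + (c * q - d * p) * a = 0"
    "(p * b - q * a) * d + (a * d - b * c) * q + (c * q - d * p) * b = 0"
    by algebra+
  obtain s1 s2 s3 where s: "s1 \<in> {1, -1}" "s2 \<in> {1, -1}" "s3 \<in> {1, -1}"
    and dets: "p * b - q * a = s1 * k" "a * d - b * c = s2 * k" "c * q - d * p = s3 * k"
    using assms(1-3) by (metis abs_eq_obtain_sign)
  have "k * (s1 * c + s2 * p + s3 * a) = 0" "k * (s1 * d + s2 * q + s3 * b) = 0"
    using cramer unfolding dets by (simp_all add: algebra_simps)
  then have "s1 * c + s2 * p + s3 * a = 0" "s1 * d + s2 * q + s3 * b = 0"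
    using assms(4) by simp_all
  with s show thesis
    by (intro that[of "- s1 * s2" "s2 * s3"]) (auto simp: algebra_simps)
qed

lemma no_four_pairwise_det:
  fixes p q a b c d e f k :: int
  assumes "\<bar>p * b - q * a\<bar> = k" "\<bar>a * d - b * c\<bar> = k" "\<bar>c * q - d * p\<bar> = k"
    "\<bar>a * f - b * e\<bar> = k" "\<bar>e * q - f * p\<bar> = k" "\<bar>c * f - d * e\<bar> = k" "k > 0"
  shows False
proof -
  obtain u s where us: "u \<in> {1, -1}" "s \<in> {1, -1}" "c = u * (p + s * a)" "d = u * (q + s * b)"
    using triangle_third_vector[OF assms(1-3)] assms(7) by auto
  obtain u' s' where us': "u' \<in> {1, -1}" "s' \<in> {1, -1}" "e = u' * (p + s' * a)" "f = u' * (q + s' * b)"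
    using triangle_third_vector[OF assms(1,4,5)] assms(7) by auto
  have "c * f - d * e = u * u' * (s' - s) * (p * b - q * a)"
    unfolding us(3,4) us'(3,4) by algebra
  then have "\<bar>c * f - d * e\<bar> = \<bar>u * u' * (s' - s)\<bar> * k"
    using assms(1) by (simp add: abs_mult)
  moreover have "\<bar>u * u' * (s' - s)\<bar> \<in> {0, 2}"
    using us(1,2) us'(1,2) by auto
  ultimately show False
    using assms(6,7) by auto
qed

lemma coprime_imp_odd_disj:
  fixes p q :: int
  assumes "coprime p q"
  shows "odd p \<or> odd q"
  using assms coprime_common_divisor[of p q 2] by auto

lemma no_coprime_triangle_even_det:
  fixes p q a b c d k :: int
  assumes "\<bar>p * b - q * a\<bar> = k" "\<bar>a * d - b * c\<bar> = k" "\<bar>c * q - d * p\<bar> = k" "k > 0" "even k"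
    "coprime p q" "coprime a b" "coprime c d"
  shows False
proof -
  obtain u s where "u \<in> {1, -1}" "s \<in> {1, -1}" "c = u * (p + s * a)" "d = u * (q + s * b)"
    using triangle_third_vector[OF assms(1-3)] assms(4) by auto
  moreover have "odd c \<or> odd d"
    using assms(8) by (rule coprime_imp_odd_disj)
  ultimately have "odd (p + a) \<or> odd (q + b)"
    by auto
  moreover have "even (p * b - q * a)"
    using assms(1,5) by (metis abs_eq_obtain_sign dvd_mult)
  ultimately show False
    using coprime_imp_odd_disj[OF assms(6)] coprime_imp_odd_disj[OF assms(7)] by auto
qed

lemma vertex_cases:
  obtains p q where "coprime p q" "v = abs_vertex (p, q)"
proof -
  have "frac_rel (rep_vertex v) (rep_vertex v)" "abs_vertex (rep_vertex v) = v"
    by (simp_all add: Quotient3_rep_reflp[OF Quotient3_vertex] Quotient3_abs_rep[OF Quotient3_vertex])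
  then show thesis
    using that by (cases "rep_vertex v") (auto simp: frac_rel_def)
qed

lemma dist_F_abs_vertex:
  assumes "coprime p q" "coprime a b"
  shows "dist_F (abs_vertex (p, q)) (abs_vertex (a, b)) = \<bar>p * b - q * a\<bar>"
  using assms by (subst dist_F.abs_eq) (auto simp: frac_rel_def)

lemma F_adj_abs_vertex:
  assumes "coprime p q" "coprime a b"
  shows "F_adj k (abs_vertex (p, q)) (abs_vertex (a, b)) \<longleftrightarrow> \<bar>p * b - q * a\<bar> = int k"
  using assms by (simp add: F_adj_def dist_F_abs_vertex)

lemma F_adj_irrefl:
  assumes "k > 0"
  shows "\<not> F_adj k v v"
proof -
  obtain p q where "coprime p q" "v = abs_vertex (p, q)"
    by (rule vertex_cases)
  with assms show ?thesis
    by (simp add: F_adj_abs_vertex)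
qed

lemma F_no_K4:
  assumes "F_adj k x y" "F_adj k y z" "F_adj k z x" "F_adj k y w" "F_adj k w x" "F_adj k z w"
    "k > 0"
  shows False
proof -
  obtain p q where x: "coprime p q" "x = abs_vertex (p, q)" by (rule vertex_cases)
  obtain a b where y: "coprime a b" "y = abs_vertex (a, b)" by (rule vertex_cases)
  obtain c d where z: "coprime c d" "z = abs_vertex (c, d)" by (rule vertex_cases)
  obtain e f where w: "coprime e f" "w = abs_vertex (e, f)" by (rule vertex_cases)
  show False
    by (rule no_four_pairwise_det[of p b q a "int k" d c f e])
      (use assms x y z w in \<open>simp_all add: F_adj_abs_vertex\<close>)
qed

lemma F_even_no_triangle:
  assumes "F_adj k x y" "F_adj k y z" "F_adj k z x" "k > 0" "even k"
  shows False
proof -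
  obtain p q where x: "coprime p q" "x = abs_vertex (p, q)" by (rule vertex_cases)
  obtain a b where y: "coprime a b" "y = abs_vertex (a, b)" by (rule vertex_cases)
  obtain c d where z: "coprime c d" "z = abs_vertex (c, d)" by (rule vertex_cases)
  show False
    by (rule no_coprime_triangle_even_det[of p b q a "int k" d c])
      (use assms x y z in \<open>simp_all add: F_adj_abs_vertex\<close>)
qed

lemma card_ge_3_obtains:
  assumes "3 \<le> card S"
  obtains x y z where "{x, y, z} \<subseteq> S" "distinct [x, y, z]"
proof -
  have "finite S"
    using assms card.infinite by fastforce
  then obtain T where "T \<subseteq> S" "card T = 3"
    using assms obtain_subset_with_card_n by metis
  then show thesis
    using that by (auto simp: card_3_iff)
qed

lemma card_ge_4_obtains:
  assumes "4 \<le> card S"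
  obtains x y z w where "{x, y, z, w} \<subseteq> S" "distinct [x, y, z, w]"
proof -
  have "Suc 3 \<le> card S"
    using assms by simp
  then obtain w B where "S = insert w B" "w \<notin> B" "3 \<le> card B"
    unfolding card_le_Suc_iff by blast
  moreover obtain x y z where "{x, y, z} \<subseteq> B" "distinct [x, y, z]"
    using card_ge_3_obtains[OF \<open>3 \<le> card B\<close>] .
  ultimately show thesis
    using that[of x y z w] by auto
qed

lemma F_clique_card_le_3:
  assumes "k > 0" "is_clique_F k S"
  shows "card S \<le> 3"
proof (rule ccontr)
  assume "\<not> card S \<le> 3"
  then have "4 \<le> card S"
    by simp
  then obtain x y z w where "{x, y, z, w} \<subseteq> S" "distinct [x, y, z, w]"
    by (rule card_ge_4_obtains)
  then show False
    using assms F_no_K4[of k x y z w] unfolding is_clique_F_def by auto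
qed

lemma F_even_clique_card_le_2:
  assumes "k > 0" "even k" "is_clique_F k S"
  shows "card S \<le> 2"
proof (rule ccontr)
  assume "\<not> card S \<le> 2"
  then have "3 \<le> card S"
    by simp
  then obtain x y z where "{x, y, z} \<subseteq> S" "distinct [x, y, z]"
    by (rule card_ge_3_obtains)
  then show False
    using assms F_even_no_triangle[of k x y z] unfolding is_clique_F_def by auto
qed

lemma F_edge_clique:
  assumes "k > 0"
  defines "S \<equiv> {abs_vertex (1, 0), abs_vertex (1, int k)}"
  shows "is_clique_F k S" "card S = 2"
proof -
  have adj: "F_adj k (abs_vertex (1, 0)) (abs_vertex (1, int k))"
    "F_adj k (abs_vertex (1, int k)) (abs_vertex (1, 0))"
    by (simp_all add: F_adj_abs_vertex)
  then show "is_clique_F k S"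
    unfolding S_def is_clique_F_def by auto
  show "card S = 2"
    using adj F_adj_irrefl[OF assms(1)] unfolding S_def by (metis card_2_iff)
qed

lemma F_odd_triangle_clique:
  assumes "odd k"
  defines "S \<equiv> {abs_vertex (1, 0), abs_vertex (1, int k), abs_vertex (2, int k)}"
  shows "is_clique_F k S" "card S = 3"
proof -
  have "coprime (2::int) (int k)" "coprime (int k) 2"
    using assms by (simp_all add: coprime_commute)
  then have adj:
    "F_adj k (abs_vertex (1, 0)) (abs_vertex (1, int k))"
    "F_adj k (abs_vertex (1, int k)) (abs_vertex (1, 0))"
    "F_adj k (abs_vertex (1, 0)) (abs_vertex (2, int k))"
    "F_adj k (abs_vertex (2, int k)) (abs_vertex (1, 0))"
    "F_adj k (abs_vertex (1, int k)) (abs_vertex (2, int k))"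
    "F_adj k (abs_vertex (2, int k)) (abs_vertex (1, int k))"
    by (simp_all add: F_adj_abs_vertex)
  then show "is_clique_F k S"
    unfolding S_def is_clique_F_def by auto
  have "k > 0"
    using assms(1) by (rule odd_pos)
  then show "card S = 3"
    using adj F_adj_irrefl unfolding S_def by (metis card_3_iff)
qed

lemma clique_number_F_eqI:
  assumes "\<And>T. finite T \<Longrightarrow> is_clique_F k T \<Longrightarrow> card T \<le> n"
    and "finite S" "is_clique_F k S" "card S = n"
  shows "clique_number_F k = enat n"
  unfolding clique_number_F_def
proof (rule antisym)
  show "(SUP T \<in> {T. finite T \<and> is_clique_F k T}. enat (card T)) \<le> enat n"
    using assms(1) by (intro SUP_least) auto
  show "enat n \<le> (SUP T \<in> {T. finite T \<and> is_clique_F k T}. enat (card T))"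
    using assms(2-4) by (intro SUP_upper2[of S]) auto
qed

theorem lemma2p3:
  fixes k :: nat
  assumes "k > 0"
  shows "clique_number_F k = (if even k then 2 else 3)"
proof (cases "even k")
  case True
  have "clique_number_F k = enat 2"
    using F_even_clique_card_le_2[OF assms True] F_edge_clique[OF assms]
    by (intro clique_number_F_eqI) auto
  with True show ?thesis
    by (simp add: numeral_eq_enat)
next
  case False
  have "clique_number_F k = enat 3"
    using F_clique_card_le_3[OF assms] F_odd_triangle_clique[OF False]
    by (intro clique_number_F_eqI) auto
  with False show ?thesis
    by (simp add: numeral_eq_enat)
qed

end
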